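(* Let $G=\langle A\cup B\rangle$ be a CS group with periodic rooted group $A$ such that either (i) $A$ has finite exponent, or (ii) the directed group $B$ has finite support. Let $S$ be a generating set of $B$. If the atomic dynamical system $\Sigma_S$ on $\mathcal P(A)$ is eventually trivial, then $G$ is periodic.
   Context: Let $X$ be a nonempty set (possibly infinite) with distinguished letter $0$, $\dot X=X\setminus\{0\}$. $X^*$ is the free monoid on $X$ viewed as a rooted tree; $\mathrm{Aut}(X^* )$ is the group of root-fixing tree automorphisms acting on the right ($gh$ = first $g$ then $h$); sections $g|_u$ are defined by $(u\star v).g=u.g\star v.(g|_u)$; elements of $\mathrm{Sym}(X)$ are identified with rooted automorphisms $(x\star v).\rho=x.\rho\star v$; $\mathrm{St}(1)$ is the first layer stabiliser. A constant spinal (CS) group is $G=\langle A\cup B\rangle$ with $A\le\mathrm{Sym}(X)$ transitive (rooted group) and $B\le\mathrm{St}(1)$ (directed group) such that $b|_0=b$ for all $b\in B$ and the elements $b|_x$ ($b\in B$, $x\in\dot X$) lie in $A$ and generate $A$. $B$ has finite support if each $b\in B$ has $b|_x=\mathrm{id}$ for all but finitely many $x$. A group is periodic if every element has finite order. Notation: $\mathrm{orb}_c(0)$ is the $\langle c\rangle$-orbit of $0$ and $\ell_c(0)$ its length. For $x\in X$ let $\mathrm{mp}_A(0,x)=\{c\in A:0.c=x\}$. For $a\in A$, $x\in X$: $\mathfrak C(a,x)=\{cac^{-1}:c\in\mathrm{mp}_A(0,x)\}$ and $\mathfrak X(a,x)=\bigcup_{c\in\mathfrak C(a,x)}\mathrm{orb}_c(0)\setminus\{0\}$.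 For $S\subseteq B$ put $H_S(a,x)=\langle b|_y: y\in\mathfrak X(a,x),\ b\in S\rangle\le A$ and define $\sigma_S(a,x)=\big\langle\, b|_{0.c}\,b|_{0.c^2}\cdots b|_{0.c^{\ell_c(0)-1}} : c\in\mathfrak C(a,x),\ b\in S\,\big\rangle\cdot H_S(a,x)'\subseteq A$, where $H_S(a,x)'$ is the derived subgroup (the set does not depend on the order of the factors in the products). $\Sigma_S:\mathcal P(A)\to\mathcal P(A)$ is the atomic map $\Sigma_S(P)=\bigcup_{a\in P}\bigcup_{x\in X}\sigma_S(a,x)$. It is eventually trivial if for every $a\in A$ there is $n$ with $\Sigma_S^m(\{a\})\subseteq\{1_A\}$ for all $m>n$. *)

theory Defs
  imports Main
begin

text \<open>The alphabet X is the whole type 'x (nonempty), with distinguished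
letter z. Automorphisms act on the right: u.g is written g u, so the
product gh (first g, then h) is the function h \<circ> g.\<close>

inductive_set gen :: "('a \<Rightarrow> 'a) set \<Rightarrow> ('a \<Rightarrow> 'a) set" for S where
  gen_id: "id \<in> gen S"
| gen_base: "s \<in> S \<Longrightarrow> s \<in> gen S"
| gen_mult: "g \<in> gen S \<Longrightarrow> h \<in> gen S \<Longrightarrow> h \<circ> g \<in> gen S"
| gen_inv: "g \<in> gen S \<Longrightarrow> inv g \<in> gen S"

definition is_subgroup :: "('a \<Rightarrow> 'a) set \<Rightarrow> bool" where
  "is_subgroup H \<longleftrightarrow> (\<forall>g\<in>H. bij g) \<and> id \<in> H \<and>
     (\<forall>g\<in>H. \<forall>h\<in>H. h \<circ> g \<in> H) \<and> (\<forall>g\<in>H. inv g \<in> H)"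

definition periodic :: "('a \<Rightarrow> 'a) set \<Rightarrow> bool" where
  "periodic H \<longleftrightarrow> (\<forall>g\<in>H. \<exists>n>0. g ^^ n = id)"

definition finite_exponent :: "('a \<Rightarrow> 'a) set \<Rightarrow> bool" where
  "finite_exponent H \<longleftrightarrow> (\<exists>n>0. \<forall>g\<in>H. g ^^ n = id)"

definition tree_aut :: "('x list \<Rightarrow> 'x list) \<Rightarrow> bool" where
  "tree_aut g \<longleftrightarrow> bij g \<and> (\<forall>u. length (g u) = length u) \<and>
     (\<forall>u v. take (length u) (g (u @ v)) = g u)"

text \<open>Section g|_u, defined by (u v).g = (u.g)(v.(g|_u)).\<close>
definition sect :: "('x list \<Rightarrow> 'x list) \<Rightarrow> 'x list \<Rightarrow> ('x list \<Rightarrow> 'x list)" where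
  "sect g u = (\<lambda>v. drop (length u) (g (u @ v)))"

definition rooted :: "('x \<Rightarrow> 'x) \<Rightarrow> ('x list \<Rightarrow> 'x list)" where
  "rooted \<rho> = (\<lambda>w. case w of [] \<Rightarrow> [] | x # v \<Rightarrow> \<rho> x # v)"

definition perm_of :: "('x list \<Rightarrow> 'x list) \<Rightarrow> ('x \<Rightarrow> 'x)" where
  "perm_of g = (\<lambda>x. hd (g [x]))"

text \<open>The element b|_y of the rooted group A (b|_y is a rooted automorphism).\<close>
definition lab :: "('x list \<Rightarrow> 'x list) \<Rightarrow> 'x \<Rightarrow> ('x \<Rightarrow> 'x)" where
  "lab b y = perm_of (sect b [y])"

definition St1 :: "('x list \<Rightarrow> 'x list) set" where
  "St1 = {g. tree_aut g \<and> (\<forall>x. g [x] = [x])}"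

definition CS_group :: "'x \<Rightarrow> ('x \<Rightarrow> 'x) set \<Rightarrow> ('x list \<Rightarrow> 'x list) set \<Rightarrow> bool" where
  "CS_group z A B \<longleftrightarrow>
     is_subgroup A \<and> (\<forall>x y. \<exists>a\<in>A. a x = y) \<and>
     is_subgroup B \<and> B \<subseteq> St1 \<and>
     (\<forall>b\<in>B. sect b [z] = b) \<and>
     (\<forall>b\<in>B. \<forall>x. x \<noteq> z \<longrightarrow> (\<exists>a\<in>A. sect b [x] = rooted a)) \<and>
     A = gen {a. \<exists>b\<in>B. \<exists>x. x \<noteq> z \<and> sect b [x] = rooted a}"

definition CS_gen :: "('x \<Rightarrow> 'x) set \<Rightarrow> ('x list \<Rightarrow> 'x list) set \<Rightarrow> ('x list \<Rightarrow> 'x list) set" where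
  "CS_gen A B = gen (rooted ` A \<union> B)"

definition finite_support :: "'x \<Rightarrow> ('x list \<Rightarrow> 'x list) set \<Rightarrow> bool" where
  "finite_support z B \<longleftrightarrow> (\<forall>b\<in>B. finite {x. sect b [x] \<noteq> id})"

definition orb :: "('x \<Rightarrow> 'x) \<Rightarrow> 'x \<Rightarrow> 'x set" where
  "orb c x = {(c ^^ n) x | n. True}"

definition orb_len :: "('x \<Rightarrow> 'x) \<Rightarrow> 'x \<Rightarrow> nat" where
  "orb_len c x = card (orb c x)"

text \<open>Product a1 a2 ... an in the right-action convention (a1 applied first).\<close>
fun rprod :: "('x \<Rightarrow> 'x) list \<Rightarrow> ('x \<Rightarrow> 'x)" where
  "rprod [] = id"
| "rprod (a # as) = rprod as \<circ> a"

definition mp :: "'x \<Rightarrow> ('x \<Rightarrow> 'x) set \<Rightarrow> 'x \<Rightarrow> ('x \<Rightarrow> 'x) set" where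
  "mp z A x = {c\<in>A. c z = x}"

text \<open>Conjugates c a c^{-1} (first c, then a, then c^{-1}).\<close>
definition CC :: "'x \<Rightarrow> ('x \<Rightarrow> 'x) set \<Rightarrow> ('x \<Rightarrow> 'x) \<Rightarrow> 'x \<Rightarrow> ('x \<Rightarrow> 'x) set" where
  "CC z A a x = {inv c \<circ> a \<circ> c | c. c \<in> mp z A x}"

definition XX :: "'x \<Rightarrow> ('x \<Rightarrow> 'x) set \<Rightarrow> ('x \<Rightarrow> 'x) \<Rightarrow> 'x \<Rightarrow> 'x set" where
  "XX z A a x = (\<Union>c\<in>CC z A a x. orb c z - {z})"

definition HS :: "'x \<Rightarrow> ('x \<Rightarrow> 'x) set \<Rightarrow> ('x list \<Rightarrow> 'x list) set \<Rightarrow> ('x \<Rightarrow> 'x) \<Rightarrow> 'x \<Rightarrow> ('x \<Rightarrow> 'x) set" where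
  "HS z A S a x = gen {lab b y | b y. y \<in> XX z A a x \<and> b \<in> S}"

text \<open>Derived subgroup, generated by commutators g^{-1} h^{-1} g h.\<close>
definition derived :: "('a \<Rightarrow> 'a) set \<Rightarrow> ('a \<Rightarrow> 'a) set" where
  "derived H = gen {h \<circ> g \<circ> inv h \<circ> inv g | g h. g \<in> H \<and> h \<in> H}"

text \<open>Product of subsets P Q = {pq} in the right-action convention.\<close>
definition setmul :: "('a \<Rightarrow> 'a) set \<Rightarrow> ('a \<Rightarrow> 'a) set \<Rightarrow> ('a \<Rightarrow> 'a) set" where
  "setmul P Q = {q \<circ> p | p q. p \<in> P \<and> q \<in> Q}"

definition sigma :: "'x \<Rightarrow> ('x \<Rightarrow> 'x) set \<Rightarrow> ('x list \<Rightarrow> 'x list) set \<Rightarrow> ('x \<Rightarrow> 'x) \<Rightarrow> 'x \<Rightarrow> ('x \<Rightarrow> 'x) set" where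
  "sigma z A S a x =
     setmul
       (gen {rprod (map (\<lambda>i. lab b ((c ^^ i) z)) [1..<orb_len c z]) | c b. c \<in> CC z A a x \<and> b \<in> S})
       (derived (HS z A S a x))"

definition Sigma_map :: "'x \<Rightarrow> ('x \<Rightarrow> 'x) set \<Rightarrow> ('x list \<Rightarrow> 'x list) set \<Rightarrow> ('x \<Rightarrow> 'x) set \<Rightarrow> ('x \<Rightarrow> 'x) set" where
  "Sigma_map z A S P = (\<Union>a\<in>P. \<Union>x. sigma z A S a x)"

definition eventually_trivial :: "'x \<Rightarrow> ('x \<Rightarrow> 'x) set \<Rightarrow> ('x list \<Rightarrow> 'x list) set \<Rightarrow> bool" where
  "eventually_trivial z A S \<longleftrightarrow>
     (\<forall>a\<in>A. \<exists>n. \<forall>m>n. (Sigma_map z A S ^^ m) {a} \<subseteq> {id})"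

end

theory Submission
  imports Defs "HOL-Library.Multiset"
begin

text \<open>Every element of \<open>G\<close> is the value of a word in letters from \<open>A\<close>, \<open>S\<close> and \<open>S\<inverse>\<close>, and
  we show by induction on the number of directed letters that every such word \<open>w\<close> has finite
  order. Let \<open>a\<close> be the permutation of the first level induced by \<open>w\<close> and \<open>k\<close> its order. Then \<open>w\<close>
  has finite order as soon as the sections of \<open>w\<^sup>k\<close> do and, outside finitely many letters, share
  an exponent; this is where finite exponent of \<open>A\<close> or finite support of \<open>B\<close> enters. The section
  of \<open>w\<^sup>k\<close> at \<open>y\<close> is a power of the return section, the section at \<open>y\<close> of \<open>w\<^sup>\<ell>\<close> with \<open>\<ell>\<close> the
  length of the \<open>a\<close>-orbit of \<open>y\<close>. It has at most as many directed letters as \<open>w\<close>, and fewer unless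
  every directed letter of \<open>w\<close> is read at \<open>z\<close> exactly once along the orbit; in that case
  collecting the labels read on the way places its root permutation in \<open>\<Sigma>\<^sub>S({a})\<close>. Eventual
  triviality of \<open>\<Sigma>\<^sub>S\<close> thus ends in words with trivial root permutation, whose sections keeping all
  directed letters are directed words, i.e. elements of \<open>B\<close>; these have finite order because
  their sections away from \<open>z\<close> are rooted and their section at \<open>z\<close> is themselves.\<close>

section \<open>Generated subgroups and the derived subgroup\<close>

lemma gen_bij: assumes "\<And>s. s \<in> S \<Longrightarrow> bij s" shows "g \<in> gen S \<Longrightarrow> bij g"
  by (induction g rule: gen.induct) (blast intro: bij_id bij_comp bij_imp_bij_inv assms)+

lemma gen_subset:
  assumes "S \<subseteq> M" "id \<in> M" "\<And>g h. g \<in> M \<Longrightarrow> h \<in> M \<Longrightarrow> h \<circ> g \<in> M" "\<And>g. g \<in> M \<Longrightarrow> inv g \<in> M"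
  shows "gen S \<subseteq> M"
proof
  show "g \<in> M" if "g \<in> gen S" for g
    using that by (induction g rule: gen.induct) (use assms in blast)+
qed

lemma gen_mono_gen: assumes "T \<subseteq> gen X" shows "gen T \<subseteq> gen X"
  by (rule gen_subset[OF assms gen.gen_id gen.gen_mult gen.gen_inv])

lemma rprod_append[simp]: "rprod (xs @ ys) = rprod ys \<circ> rprod xs"
  by (induction xs) auto

lemma rprod_concat: "rprod (concat xss) = rprod (map rprod xss)"
  by (induction xss) auto

lemma rprod_in_gen: "set xs \<subseteq> gen T \<Longrightarrow> rprod xs \<in> gen T"
  by (induction xs) (simp_all add: gen.gen_id gen.gen_mult)

lemma bij_inv_left: "bij f \<Longrightarrow> inv f (f x) = x"
  by (simp add: bij_is_inj)

lemma bij_inv_right: "bij f \<Longrightarrow> f (inv f x) = x"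
  by (simp add: bij_is_surj surj_f_inv_f)

lemma bij_rprod: "\<forall>x\<in>set xs. bij x \<Longrightarrow> bij (rprod xs)"
  by (induction xs) (simp_all add: bij_comp)

lemma inv_rprod: "\<forall>x\<in>set xs. bij x \<Longrightarrow> inv (rprod xs) = rprod (rev (map inv xs))"
proof (induction xs)
  case (Cons x xs)
  then have "bij (rprod xs)" "bij x" using bij_rprod by auto
  then have "inv (rprod xs \<circ> x) = inv x \<circ> inv (rprod xs)" by (rule o_inv_distrib)
  moreover have "inv (rprod xs) = rprod (rev (map inv xs))" using Cons by simp
  ultimately show ?case by (simp only: list.map rev.simps rprod_append rprod.simps id_comp)
qed simp

lemma inv_conj: assumes "bij Y" "bij h" shows "inv (Y \<circ> h \<circ> inv Y) = Y \<circ> inv h \<circ> inv Y"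
proof (rule inv_unique_comp)
  show "Y \<circ> h \<circ> inv Y \<circ> (Y \<circ> inv h \<circ> inv Y) = id" "Y \<circ> inv h \<circ> inv Y \<circ> (Y \<circ> h \<circ> inv Y) = id"
    using assms by (simp_all add: fun_eq_iff bij_inv_left bij_inv_right)
qed

definition mod_derived :: "('a \<Rightarrow> 'a) set \<Rightarrow> ('a \<Rightarrow> 'a) \<Rightarrow> ('a \<Rightarrow> 'a) \<Rightarrow> bool" where
  "mod_derived H u v \<longleftrightarrow> (\<exists>k\<in>derived H. u = k \<circ> v)"

locale bij_gens =
  fixes X :: "('a \<Rightarrow> 'a) set"
  assumes bij_gen: "\<And>x. x \<in> X \<Longrightarrow> bij x"
begin

abbreviation "H \<equiv> gen X"
abbreviation "K \<equiv> derived (gen X)"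

lemma H_bij: "h \<in> H \<Longrightarrow> bij h"
  using gen_bij bij_gen by blast

lemma commutator_in_K: "g \<in> H \<Longrightarrow> h \<in> H \<Longrightarrow> h \<circ> g \<circ> inv h \<circ> inv g \<in> K"
  unfolding derived_def by (rule gen_base) blast

lemma K_subset_H: "K \<subseteq> H"
  unfolding derived_def by (rule gen_mono_gen) (auto intro: gen.intros)

lemma K_normal: assumes Y: "Y \<in> H" and k: "k \<in> K" shows "Y \<circ> k \<circ> inv Y \<in> K"
proof -
  define C where "C = {h \<circ> g \<circ> inv h \<circ> inv g |g h. g \<in> H \<and> h \<in> H}"
  define M where "M = {k. k \<in> H \<and> Y \<circ> k \<circ> inv Y \<in> gen C}"
  have bY: "bij Y" using H_bij[OF Y] .
  have conj_H: "Y \<circ> h \<circ> inv Y \<in> H" if "h \<in> H" for h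
    using Y that by (blast intro: gen.intros)
  have "gen C \<subseteq> M"
  proof (rule gen_subset)
    show "C \<subseteq> M"
    proof
      fix c assume "c \<in> C"
      then obtain g h where c: "c = h \<circ> g \<circ> inv h \<circ> inv g" "g \<in> H" "h \<in> H" unfolding C_def by blast
      define g' where "g' = Y \<circ> g \<circ> inv Y"
      define h' where "h' = Y \<circ> h \<circ> inv Y"
      have "Y \<circ> c \<circ> inv Y = h' \<circ> g' \<circ> inv h' \<circ> inv g'"
        unfolding g'_def h'_def c inv_conj[OF bY H_bij[OF c(3)]] inv_conj[OF bY H_bij[OF c(2)]]
        using bY by (auto simp: fun_eq_iff bij_inv_left)
      moreover have "g' \<in> H" "h' \<in> H" using conj_H c g'_def h'_def by auto
      ultimately have "Y \<circ> c \<circ> inv Y \<in> C" unfolding C_def by blast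
      moreover have "c \<in> H" using c by (blast intro: gen.intros)
      ultimately show "c \<in> M" unfolding M_def by (simp add: gen.gen_base)
    qed
    have "Y \<circ> id \<circ> inv Y = id" using bY by (auto simp: fun_eq_iff bij_inv_right)
    then show "id \<in> M" unfolding M_def by (simp add: gen.gen_id)
    show "k2 \<circ> k1 \<in> M" if "k1 \<in> M" "k2 \<in> M" for k1 k2
    proof -
      have "Y \<circ> (k2 \<circ> k1) \<circ> inv Y = (Y \<circ> k2 \<circ> inv Y) \<circ> (Y \<circ> k1 \<circ> inv Y)"
        using bY by (auto simp: fun_eq_iff bij_inv_left)
      then show ?thesis using that unfolding M_def by (simp add: gen.gen_mult)
    qed
    show "inv k \<in> M" if "k \<in> M" for k
    proof -
      have "Y \<circ> inv k \<circ> inv Y = inv (Y \<circ> k \<circ> inv Y)"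
        using that inv_conj[OF bY] H_bij unfolding M_def by simp
      then show ?thesis using that unfolding M_def by (simp add: gen.gen_inv)
    qed
  qed
  then show ?thesis using k unfolding derived_def C_def M_def by blast
qed

lemma mod_derived_refl: "mod_derived H u u"
  unfolding mod_derived_def derived_def by (intro bexI[of _ id]) (auto intro: gen.gen_id)

lemma mod_derived_trans: "mod_derived H u v \<Longrightarrow> mod_derived H v w \<Longrightarrow> mod_derived H u w"
proof -
  assume "mod_derived H u v" "mod_derived H v w"
  then obtain k1 k2 where "k1 \<in> K" "u = k1 \<circ> v" "k2 \<in> K" "v = k2 \<circ> w"
    unfolding mod_derived_def by blast
  moreover have "k1 \<circ> k2 \<in> K" using calculation unfolding derived_def by (simp add: gen.gen_mult)
  ultimately show "mod_derived H u w" unfolding mod_derived_def by (metis comp_assoc)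
qed

lemma mod_derived_comp:
  assumes "V \<in> H" "mod_derived H u v" "mod_derived H U V"
  shows "mod_derived H (U \<circ> u) (V \<circ> v)"
proof -
  obtain k1 k2 where k: "k1 \<in> K" "U = k1 \<circ> V" "k2 \<in> K" "u = k2 \<circ> v"
    using assms unfolding mod_derived_def by blast
  have "U \<circ> u = (k1 \<circ> (V \<circ> k2 \<circ> inv V)) \<circ> (V \<circ> v)"
    using k H_bij[OF assms(1)] by (auto simp: fun_eq_iff bij_inv_left)
  moreover have "k1 \<circ> (V \<circ> k2 \<circ> inv V) \<in> K"
    using K_normal[OF assms(1) k(3)] k(1) unfolding derived_def by (rule gen.gen_mult)
  ultimately show ?thesis unfolding mod_derived_def by blast
qed

lemma mod_derived_inv:
  assumes "v \<in> H" "mod_derived H u v" shows "mod_derived H (inv u) (inv v)"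
proof -
  obtain k where k: "k \<in> K" "u = k \<circ> v" using assms(2) unfolding mod_derived_def by blast
  have bv: "bij v" and bk: "bij k" using H_bij assms(1) K_subset_H k by auto
  have "inv u = inv v \<circ> inv k" using k bv bk by (simp add: o_inv_distrib)
  then have "inv u = (inv v \<circ> inv k \<circ> inv (inv v)) \<circ> inv v"
    using bv by (auto simp: fun_eq_iff inv_inv_eq bij_inv_right)
  moreover have "inv v \<circ> inv k \<circ> inv (inv v) \<in> K"
    using K_normal[OF gen.gen_inv[OF assms(1)]] k(1) unfolding derived_def by (blast intro: gen.gen_inv)
  ultimately show ?thesis unfolding mod_derived_def by blast
qed

lemma mod_derived_swap: assumes "x \<in> H" "y \<in> H" shows "mod_derived H (x \<circ> y) (y \<circ> x)"
proof -
  have "x \<circ> y = (x \<circ> y \<circ> inv x \<circ> inv y) \<circ> (y \<circ> x)"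
    using H_bij assms by (auto simp: fun_eq_iff bij_inv_left)
  then show ?thesis unfolding mod_derived_def using commutator_in_K[OF assms(2,1)] by blast
qed

lemma mod_derived_rprod_perm:
  "set xs \<subseteq> H \<Longrightarrow> mset xs = mset ys \<Longrightarrow> mod_derived H (rprod xs) (rprod ys)"
proof (induction xs arbitrary: ys)
  case Nil then show ?case by (simp add: mod_derived_refl)
next
  case (Cons x xs)
  have "x \<in> set ys" using Cons.prems by (metis list.set_intros(1) set_mset_mset)
  then obtain ys1 ys2 where ys: "ys = ys1 @ x # ys2" by (meson split_list)
  have m: "mset xs = mset (ys1 @ ys2)" using Cons.prems ys by simp
  have H12: "set (ys1 @ ys2) \<subseteq> H" using Cons.prems m by (metis set_mset_mset insert_subset list.set(2))
  have xH: "x \<in> H" and xsH: "set xs \<subseteq> H" using Cons.prems by auto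
  have "mod_derived H (rprod xs \<circ> x) (rprod (ys1 @ ys2) \<circ> x)"
    by (rule mod_derived_comp[OF rprod_in_gen[OF H12] mod_derived_refl Cons.IH[OF xsH m]])
  moreover have "mod_derived H (rprod ys2 \<circ> (rprod ys1 \<circ> x)) (rprod ys2 \<circ> (x \<circ> rprod ys1))"
    using H12 xH by (intro mod_derived_comp mod_derived_swap mod_derived_refl rprod_in_gen) auto
  then have "mod_derived H (rprod (ys1 @ ys2) \<circ> x) (rprod ys)"
    unfolding ys rprod_append rprod.simps comp_assoc .
  ultimately show ?case unfolding rprod.simps by (rule mod_derived_trans)
qed

lemma mod_derived_rprod:
  "list_all2 (mod_derived H) xs ys \<Longrightarrow> set ys \<subseteq> H \<Longrightarrow> mod_derived H (rprod xs) (rprod ys)"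
  by (induction xs ys rule: list_all2_induct)
    (auto simp: mod_derived_refl intro: mod_derived_comp rprod_in_gen)

lemma mod_derived_rprod_inv:
  assumes "set xs \<subseteq> H" shows "mod_derived H (rprod (map inv xs)) (inv (rprod xs))"
proof -
  have "mod_derived H (rprod (map inv xs)) (rprod (rev (map inv xs)))"
    using assms by (intro mod_derived_rprod_perm) (auto intro: gen.gen_inv)
  moreover have "inv (rprod xs) = rprod (rev (map inv xs))"
    using assms H_bij by (intro inv_rprod) blast
  ultimately show ?thesis by simp
qed

end

section \<open>Orders and orbits of permutations\<close>

definition finite_order :: "('a \<Rightarrow> 'a) \<Rightarrow> bool" where
  "finite_order f \<longleftrightarrow> (\<exists>K>0. f ^^ K = id)"

lemma funpow_id_eq_id[simp]: "(id :: 'a \<Rightarrow> 'a) ^^ n = id"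
  by (induction n) auto

lemma funpow_eq_id_dvd: "f ^^ M = id \<Longrightarrow> M dvd K \<Longrightarrow> f ^^ K = id"
  by (auto simp: funpow_mult[symmetric])

lemma finite_order_funpow: "finite_order f \<Longrightarrow> finite_order (f ^^ q)"
  unfolding finite_order_def by (metis funpow_mult mult.commute funpow_id_eq_id)

lemma common_exponent:
  assumes "\<And>y. finite_order (u y)" "finite F" "E > 0" "\<And>y. y \<notin> F \<Longrightarrow> u y ^^ E = id"
  shows "\<exists>K>0. \<forall>y. u y ^^ K = id"
proof -
  define M where "M y = (SOME M. M > 0 \<and> u y ^^ M = id)" for y
  have M: "M y > 0 \<and> u y ^^ M y = id" for y
    using assms(1)[of y] unfolding finite_order_def M_def by (metis (mono_tags, lifting) someI_ex)
  define K where "K = E * prod M F"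
  have "u y ^^ K = id" for y
  proof (cases "y \<in> F")
    case True
    then have "M y dvd K" unfolding K_def using assms(2) by (simp add: dvd_prodI)
    then show ?thesis using M funpow_eq_id_dvd by blast
  next
    case False
    then show ?thesis using assms(4) funpow_eq_id_dvd[where f="u y" and M=E and K=K] by (simp add: K_def)
  qed
  moreover have "K > 0" unfolding K_def using M assms(3) by (simp add: prod_pos)
  ultimately show ?thesis by blast
qed

definition orbit_period :: "('a \<Rightarrow> 'a) \<Rightarrow> 'a \<Rightarrow> nat" where
  "orbit_period a y = (LEAST l. 0 < l \<and> (a ^^ l) y = y)"

lemma funpow_mod_period: assumes "(a ^^ p) y = y" shows "(a ^^ n) y = (a ^^ (n mod p)) y"
proof -
  have fix_mult: "(a ^^ (p * q)) y = y" for q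
    by (induction q) (simp_all add: funpow_add assms)
  have "(a ^^ n) y = (a ^^ (n mod p)) ((a ^^ (p * (n div p))) y)"
    by (metis funpow_add o_apply mod_mult_div_eq)
  then show ?thesis using fix_mult by simp
qed

lemma orbit_period_id: "orbit_period id y = 1"
  unfolding orbit_period_def by (rule Least_equality) auto

context
  fixes a :: "'a \<Rightarrow> 'a" and y :: 'a
  assumes periodic_point: "\<exists>k>0. (a ^^ k) y = y"
begin

lemma orbit_period_pos: "0 < orbit_period a y"
  and funpow_orbit_period: "(a ^^ orbit_period a y) y = y"
  using LeastI_ex[OF periodic_point] unfolding orbit_period_def by auto

lemma orbit_period_least: "0 < j \<Longrightarrow> j < orbit_period a y \<Longrightarrow> (a ^^ j) y \<noteq> y"
  unfolding orbit_period_def using not_less_Least by blast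

lemma orbit_period_dvd: assumes "(a ^^ k) y = y" shows "orbit_period a y dvd k"
proof -
  have "(a ^^ (k mod orbit_period a y)) y = y"
    using funpow_mod_period[OF funpow_orbit_period, of k] assms by simp
  then have "k mod orbit_period a y = 0"
    using orbit_period_least orbit_period_pos by (metis mod_less_divisor neq0_conv)
  then show ?thesis by auto
qed

abbreviation orbit_list :: "'a list" where
  "orbit_list \<equiv> map (\<lambda>i. (a ^^ i) y) [0..<orbit_period a y]"

lemma distinct_orbit_list: assumes "inj a" shows "distinct orbit_list"
proof -
  have "i = j" if ij: "i < j" "j < orbit_period a y" "(a ^^ i) y = (a ^^ j) y" for i j
  proof -
    have "(a ^^ i) ((a ^^ (j - i)) y) = (a ^^ i) y"
      using ij by (metis funpow_add le_add_diff_inverse less_imp_le o_apply)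
    then have "(a ^^ (j - i)) y = y" using inj_fn[OF assms] by (metis injD)
    then show ?thesis using orbit_period_least[of "j - i"] ij by simp
  qed
  then show ?thesis unfolding distinct_map by (auto simp: inj_on_def) (metis linorder_neqE_nat)
qed

lemma orb_eq_orbit_list: "orb a y = set orbit_list"
proof -
  have "(a ^^ n) y \<in> set orbit_list" for n
    using funpow_mod_period[OF funpow_orbit_period, of n] orbit_period_pos by auto
  then show ?thesis unfolding orb_def by auto
qed

lemma orb_len_eq_orbit_period: "inj a \<Longrightarrow> orb_len a y = orbit_period a y"
  unfolding orb_len_def orb_eq_orbit_list using distinct_card[OF distinct_orbit_list] by simp

lemma orb_funpow_point: "orb a ((a ^^ m) y) = orb a y"
proof -
  have "(a ^^ n) ((a ^^ m) y) = (a ^^ (n + m)) y" for n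
    by (simp add: funpow_add)
  moreover have "(a ^^ n) y = (a ^^ (n + (orbit_period a y - 1) * m)) ((a ^^ m) y)" for n
  proof -
    have "(a ^^ n) y = (a ^^ (n + orbit_period a y * m)) y"
      using funpow_mod_period[OF funpow_orbit_period] by (metis mod_mult_self2)
    also have "n + orbit_period a y * m = n + (orbit_period a y - 1) * m + m"
      using orbit_period_pos by (cases "orbit_period a y") auto
    finally show ?thesis by (simp add: funpow_add)
  qed
  ultimately show ?thesis unfolding orb_def by blast
qed

end

lemma funpow_conj: assumes "bij p" shows "(p \<circ> a \<circ> inv p) ^^ i = p \<circ> a ^^ i \<circ> inv p"
  by (induction i) (simp_all add: fun_eq_iff bij_inv_left[OF assms] bij_inv_right[OF assms])

lemma orb_conj: assumes "bij p" shows "orb (p \<circ> a \<circ> inv p) (p x) = p ` orb a x"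
  unfolding orb_def funpow_conj[OF assms] using bij_inv_left[OF assms] by auto

lemma funpow_commute_apply: "(a ^^ i) ((a ^^ m) y) = (a ^^ m) ((a ^^ i) y)"
  by (metis comp_apply funpow_add add.commute)

text \<open>Conjugating \<open>a\<close> by \<open>p\<close> moves the \<open>a\<close>-orbit of \<open>y\<close> onto the orbit of \<open>z\<close>, read from a
  shifted starting point.\<close>

lemma conj_orbit:
  assumes p: "bij p" and a: "bij a" and y: "\<exists>k>0. (a ^^ k) y = y" and hit: "p ((a ^^ m) y) = z"
  defines "d \<equiv> p \<circ> a \<circ> inv p" and "l \<equiv> orbit_period a y"
  shows "orb d z = p ` orb a y"
    and "orb_len d z = l"
    and "mset (map (\<lambda>i. p ((a ^^ i) y)) [0..<l]) = mset (map (\<lambda>i. (d ^^ i) z) [0..<l])"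
proof -
  show orb_d: "orb d z = p ` orb a y"
    using orb_conj[OF p, of a "(a ^^ m) y"] orb_funpow_point[OF y] hit unfolding d_def by simp
  have d_z: "(d ^^ i) z = p ((a ^^ i) ((a ^^ m) y))" for i
    using hit bij_inv_left[OF p] unfolding d_def funpow_conj[OF p] by (metis comp_apply)
  have z_periodic: "\<exists>k>0. (d ^^ k) z = z"
    using y unfolding d_z by (metis funpow_commute_apply hit)
  have "orb_len d z = card (p ` orb a y)" unfolding orb_len_def orb_d ..
  also have "\<dots> = l"
    using orb_len_eq_orbit_period[OF y bij_is_inj[OF a]] bij_is_inj[OF p]
    by (simp add: card_image inj_on_subset orb_len_def l_def)
  finally show len: "orb_len d z = l" .
  have d_bij: "bij d" unfolding d_def using p a by (simp add: bij_comp bij_imp_bij_inv)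
  have "orbit_period d z = l"
    using len orb_len_eq_orbit_period[OF z_periodic bij_is_inj[OF d_bij]] by simp
  then have "distinct (map (\<lambda>i. (d ^^ i) z) [0..<l])" "set (map (\<lambda>i. (d ^^ i) z) [0..<l]) = orb d z"
    using distinct_orbit_list[OF z_periodic bij_is_inj[OF d_bij]] orb_eq_orbit_list[OF z_periodic] by simp_all
  moreover have "distinct (map (\<lambda>i. p ((a ^^ i) y)) [0..<l])"
    using distinct_orbit_list[OF y bij_is_inj[OF a]] bij_is_inj[OF p]
    unfolding l_def by (simp add: distinct_map inj_on_def)
  moreover have "set (map (\<lambda>i. p ((a ^^ i) y)) [0..<l]) = orb d z"
    unfolding orb_d orb_eq_orbit_list[OF y] l_def by auto
  ultimately show "mset (map (\<lambda>i. p ((a ^^ i) y)) [0..<l]) = mset (map (\<lambda>i. (d ^^ i) z) [0..<l])"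
    by (metis set_eq_iff_mset_eq_distinct)
qed

section \<open>Words in the generators\<close>

lemma rooted_Nil[simp]: "rooted a [] = []"
  and rooted_Cons[simp]: "rooted a (x # v) = a x # v"
  by (auto simp: rooted_def)

lemma perm_of_rooted[simp]: "perm_of (rooted a) = a"
  by (auto simp: perm_of_def)

lemma rooted_comp: "rooted b \<circ> rooted a = rooted (b \<circ> a)"
  by (rule ext) (simp add: rooted_def split: list.splits)

lemma rooted_id[simp]: "rooted id = id"
  by (rule ext) (simp add: rooted_def split: list.splits)

lemma rooted_funpow: "rooted a ^^ n = rooted (a ^^ n)"
  by (induction n) (simp_all only: funpow.simps rooted_id rooted_comp)

lemma rooted_comp_inv: assumes "bij a" shows "rooted a \<circ> rooted (inv a) = id" "rooted (inv a) \<circ> rooted a = id"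
  using assms by (simp_all add: rooted_comp bij_is_inj bij_is_surj surj_iff[THEN iffD1] inv_o_cancel)

lemma rooted_inv: "bij a \<Longrightarrow> inv (rooted a) = rooted (inv a)"
  by (rule inv_unique_comp) (simp_all add: rooted_comp_inv)

lemma rooted_bij: "bij a \<Longrightarrow> bij (rooted a)"
  by (rule o_bij[of "rooted (inv a)"]) (simp_all add: rooted_comp_inv)

text \<open>Words over the generators \<open>A \<union> S \<union> S\<inverse>\<close> of a CS group; \<open>Dir s\<close> stands for \<open>s\<close> and
  \<open>DirInv s\<close> for its inverse.\<close>

datatype 'a letter = is_Rt: Rt "'a \<Rightarrow> 'a" | Dir "'a list \<Rightarrow> 'a list" | DirInv "'a list \<Rightarrow> 'a list"

fun eval_letter :: "'a letter \<Rightarrow> 'a list \<Rightarrow> 'a list" where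
  "eval_letter (Rt a) = rooted a"
| "eval_letter (Dir s) = s"
| "eval_letter (DirInv s) = inv s"

fun eval_word :: "'a letter list \<Rightarrow> 'a list \<Rightarrow> 'a list" where
  "eval_word [] = id"
| "eval_word (l # w) = eval_word w \<circ> eval_letter l"

fun word_perm :: "'a letter list \<Rightarrow> 'a \<Rightarrow> 'a" where
  "word_perm [] = id"
| "word_perm (Rt a # w) = word_perm w \<circ> a"
| "word_perm (Dir s # w) = word_perm w"
| "word_perm (DirInv s # w) = word_perm w"

fun dir_count :: "'a letter list \<Rightarrow> nat" where
  "dir_count [] = 0"
| "dir_count (Rt a # w) = dir_count w"
| "dir_count (Dir s # w) = Suc (dir_count w)"
| "dir_count (DirInv s # w) = Suc (dir_count w)"

text \<open>The section of a word at a letter \<open>y\<close>, computed letter by letter: a directed letter keeps its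
  form at \<open>z\<close> and becomes the rooted letter \<open>s|\<^sub>y\<close> elsewhere.\<close>

fun word_sect :: "'a \<Rightarrow> 'a letter list \<Rightarrow> 'a \<Rightarrow> 'a letter list" where
  "word_sect z [] y = []"
| "word_sect z (Rt a # w) y = word_sect z w (a y)"
| "word_sect z (Dir s # w) y = (if y = z then [Dir s] else [Rt (lab s y)]) @ word_sect z w y"
| "word_sect z (DirInv s # w) y = (if y = z then [DirInv s] else [Rt (inv (lab s y))]) @ word_sect z w y"

text \<open>The directed letters of a word, each with the permutation \<open>p\<close> of \<open>X\<close> performed before it
  (starting from \<open>p\<close>) and its sign.\<close>

fun dir_occs :: "('a \<Rightarrow> 'a) \<Rightarrow> 'a letter list \<Rightarrow> (('a \<Rightarrow> 'a) \<times> bool \<times> ('a list \<Rightarrow> 'a list)) list" where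
  "dir_occs p [] = []"
| "dir_occs p (Rt a # w) = dir_occs (a \<circ> p) w"
| "dir_occs p (Dir s # w) = (p, True, s) # dir_occs p w"
| "dir_occs p (DirInv s # w) = (p, False, s) # dir_occs p w"

fun occ_lab :: "('a \<Rightarrow> 'a) \<times> bool \<times> ('a list \<Rightarrow> 'a list) \<Rightarrow> 'a \<Rightarrow> ('a \<Rightarrow> 'a)" where
  "occ_lab (p, e, s) q = (if e then lab s (p q) else inv (lab s (p q)))"

definition word_over :: "('a \<Rightarrow> 'a) set \<Rightarrow> ('a list \<Rightarrow> 'a list) set \<Rightarrow> 'a letter list \<Rightarrow> bool" where
  "word_over A S w \<longleftrightarrow> (\<forall>l\<in>set w. case l of Rt a \<Rightarrow> a \<in> A | Dir s \<Rightarrow> s \<in> S | DirInv s \<Rightarrow> s \<in> S)"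

definition directed_word :: "'a letter list \<Rightarrow> bool" where
  "directed_word w \<longleftrightarrow> (\<forall>l\<in>set w. \<not> is_Rt l)"

definition word_pow :: "'a letter list \<Rightarrow> nat \<Rightarrow> 'a letter list" where
  "word_pow w n = concat (replicate n w)"

fun letter_inv :: "'a letter \<Rightarrow> 'a letter" where
  "letter_inv (Rt a) = Rt (inv a)"
| "letter_inv (Dir s) = DirInv s"
| "letter_inv (DirInv s) = Dir s"

definition word_inv :: "'a letter list \<Rightarrow> 'a letter list" where
  "word_inv w = rev (map letter_inv w)"

lemma word_over_simps[simp]:
  "word_over A S []"
  "word_over A S (Rt a # w) \<longleftrightarrow> a \<in> A \<and> word_over A S w"
  "word_over A S (Dir s # w) \<longleftrightarrow> s \<in> S \<and> word_over A S w"
  "word_over A S (DirInv s # w) \<longleftrightarrow> s \<in> S \<and> word_over A S w"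
  "word_over A S (u @ v) \<longleftrightarrow> word_over A S u \<and> word_over A S v"
  by (auto simp: word_over_def)

lemma eval_word_append[simp]: "eval_word (u @ v) = eval_word v \<circ> eval_word u"
  by (induction u) auto

lemma word_perm_append[simp]: "word_perm (u @ v) = word_perm v \<circ> word_perm u"
  by (induction u rule: dir_count.induct) (auto simp: comp_assoc)

lemma dir_count_append[simp]: "dir_count (u @ v) = dir_count u + dir_count v"
  by (induction u rule: dir_count.induct) auto

lemma word_sect_append[simp]: "word_sect z (u @ v) y = word_sect z u y @ word_sect z v (word_perm u y)"
  by (induction u arbitrary: y rule: dir_count.induct) auto

lemma word_pow_0[simp]: "word_pow w 0 = []"
  by (simp add: word_pow_def)

lemma word_pow_Suc: "word_pow w (Suc n) = w @ word_pow w n"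
  by (simp add: word_pow_def)

lemma word_pow_Suc_right: "word_pow w (Suc n) = word_pow w n @ w"
  unfolding word_pow_def by (induction n) auto

lemma word_over_word_pow: "word_over A S w \<Longrightarrow> word_over A S (word_pow w n)"
  by (induction n) (auto simp: word_pow_def)

lemma eval_word_pow: "eval_word (word_pow w n) = eval_word w ^^ n"
  by (induction n) (simp_all add: word_pow_def funpow_Suc_right del: funpow.simps)

lemma word_perm_pow: "word_perm (word_pow w n) = word_perm w ^^ n"
  by (induction n) (simp_all add: word_pow_def funpow_Suc_right del: funpow.simps)

lemma word_pow_mult: "word_pow w (m * n) = word_pow (word_pow w m) n"
  by (induction n) (auto simp: word_pow_def replicate_add)

lemma word_sect_pow_fixed: "word_perm w y = y \<Longrightarrow> word_sect z (word_pow w q) y = word_pow (word_sect z w y) q"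
  by (induction q) (auto simp: word_pow_Suc)

lemma word_sect_pow:
  "word_sect z (word_pow w n) y = concat (map (\<lambda>i. word_sect z w ((word_perm w ^^ i) y)) [0..<n])"
  by (induction n) (auto simp: word_pow_Suc_right word_perm_pow)

lemma dir_count_word_sect_le: "dir_count (word_sect z w y) \<le> dir_count w"
  by (induction w arbitrary: y rule: dir_count.induct) (auto simp: le_SucI)

lemma dir_count_concat: "dir_count (concat us) = sum_list (map dir_count us)"
  by (induction us) auto

lemma word_perm_concat: "word_perm (concat us) = rprod (map word_perm us)"
  by (induction us) auto

lemma dir_count_eq_0_eval_word: "dir_count w = 0 \<Longrightarrow> eval_word w = rooted (word_perm w)"
  by (induction w rule: dir_count.induct) (simp_all add: rooted_comp)

lemma directed_word_word_perm: "directed_word w \<Longrightarrow> word_perm w = id"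
  by (induction w rule: dir_count.induct) (auto simp: directed_word_def)

lemma directed_word_word_sect_z: "directed_word w \<Longrightarrow> word_sect z w z = w"
  by (induction w rule: dir_count.induct) (auto simp: directed_word_def)

lemma directed_word_word_sect: "directed_word w \<Longrightarrow> y \<noteq> z \<Longrightarrow> dir_count (word_sect z w y) = 0"
  by (induction w rule: dir_count.induct) (auto simp: directed_word_def)

lemma directed_word_word_inv: "directed_word w \<Longrightarrow> directed_word (word_inv w)"
  by (induction w rule: dir_count.induct) (auto simp: directed_word_def word_inv_def)

lemma word_sect_full_count: "dir_count (word_sect z w y) = dir_count w \<Longrightarrow> directed_word (word_sect z w y)"
proof (induction w arbitrary: y rule: dir_count.induct)
  case (3 s w)
  then show ?case using dir_count_word_sect_le[of z w y] by (auto simp: directed_word_def split: if_splits)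
next
  case (4 s w)
  then show ?case using dir_count_word_sect_le[of z w y] by (auto simp: directed_word_def split: if_splits)
qed (auto simp: directed_word_def)

lemma dir_count_eq_length_dir_occs: "dir_count w = length (dir_occs p w)"
  by (induction w arbitrary: p rule: dir_count.induct) auto

lemma dir_count_word_sect_dir_occs:
  "dir_count (word_sect z w (p y)) = length (filter (\<lambda>t. fst t y = z) (dir_occs p w))"
proof (induction w arbitrary: p rule: dir_count.induct)
  case (2 a w)
  then show ?case using "2.IH"[of "a \<circ> p"] by (simp add: comp_def)
qed auto

lemma sum_list_swap: "(\<Sum>i\<leftarrow>xs. \<Sum>t\<leftarrow>ys. f i t) = (\<Sum>t\<leftarrow>ys. \<Sum>i\<leftarrow>xs. (f i t :: nat))"
  by (induction xs) (simp_all add: sum_list_addf)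

lemma length_filter_eq_sum_list: "length (filter P xs) = (\<Sum>x\<leftarrow>xs. if P x then 1 else 0)"
  by (induction xs) auto

lemma dir_count_word_sect_pow:
  "dir_count (word_sect z (word_pow w n) y)
    = (\<Sum>t\<leftarrow>dir_occs id w. length (filter (\<lambda>i. fst t ((word_perm w ^^ i) y) = z) [0..<n]))"
proof -
  have occs: "dir_count (word_sect z w q) = length (filter (\<lambda>t. fst t q = z) (dir_occs id w))" for q
    using dir_count_word_sect_dir_occs[where p = id and y = q] by simp
  have "dir_count (word_sect z (word_pow w n) y) = (\<Sum>i\<leftarrow>[0..<n]. dir_count (word_sect z w ((word_perm w ^^ i) y)))"
    by (simp add: word_sect_pow dir_count_concat comp_def)
  also have "\<dots> = (\<Sum>i\<leftarrow>[0..<n]. length (filter (\<lambda>t. fst t ((word_perm w ^^ i) y) = z) (dir_occs id w)))"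
    by (simp only: occs)
  also have "\<dots> = (\<Sum>t\<leftarrow>dir_occs id w. length (filter (\<lambda>i. fst t ((word_perm w ^^ i) y) = z) [0..<n]))"
    unfolding length_filter_eq_sum_list by (rule sum_list_swap)
  finally show ?thesis .
qed

lemma finite_order_rooted: "finite_order a \<Longrightarrow> finite_order (rooted a)"
  unfolding finite_order_def by (metis rooted_funpow rooted_id)

section \<open>Words in a CS group\<close>

locale cs_setting =
  fixes z :: 'x and A :: "('x \<Rightarrow> 'x) set" and B S :: "('x list \<Rightarrow> 'x list) set"
  assumes CS: "CS_group z A B" and S_subset_B: "S \<subseteq> B" and B_eq_gen_S: "B = gen S"
begin

lemma A_subgroup: "is_subgroup A"
  using CS unfolding CS_group_def by blast

lemma A_bij: "a \<in> A \<Longrightarrow> bij a"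
  and A_comp: "a \<in> A \<Longrightarrow> b \<in> A \<Longrightarrow> b \<circ> a \<in> A"
  and A_inv: "a \<in> A \<Longrightarrow> inv a \<in> A"
  and A_id: "id \<in> A"
  using A_subgroup by (simp_all add: is_subgroup_def)

lemma A_funpow: "a \<in> A \<Longrightarrow> a ^^ n \<in> A"
  by (induction n) (auto simp: A_id A_comp)

lemma B_St1: "b \<in> B \<Longrightarrow> b \<in> St1"
  and B_sect_z: "b \<in> B \<Longrightarrow> sect b [z] = b"
  and B_sect_rooted: "b \<in> B \<Longrightarrow> x \<noteq> z \<Longrightarrow> \<exists>a\<in>A. sect b [x] = rooted a"
  using CS unfolding CS_group_def by blast+

lemma S_B: "s \<in> S \<Longrightarrow> s \<in> B"
  using S_subset_B by blast

lemma B_bij: "b \<in> B \<Longrightarrow> bij b"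
  using B_St1 by (auto simp: St1_def tree_aut_def)

lemma sect_eq_rooted_lab: "b \<in> B \<Longrightarrow> x \<noteq> z \<Longrightarrow> sect b [x] = rooted (lab b x)"
  and lab_in_A: "b \<in> B \<Longrightarrow> x \<noteq> z \<Longrightarrow> lab b x \<in> A"
  using B_sect_rooted[of b x] by (auto simp: lab_def)

lemma B_Nil: assumes "b \<in> B" shows "b [] = []"
proof -
  have "length (b []) = 0" using B_St1[OF assms] by (simp add: St1_def tree_aut_def)
  then show ?thesis by simp
qed

lemma B_Cons: assumes "b \<in> B" shows "b (x # v) = x # sect b [x] v"
proof -
  have ta: "tree_aut b" and bx: "b [x] = [x]" using B_St1[OF assms] by (auto simp: St1_def)
  have "take (length [x]) (b ([x] @ v)) = b [x]" using ta unfolding tree_aut_def by blast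
  then have "take 1 (b (x # v)) = [x]" using bx by simp
  then have "b (x # v) = [x] @ drop 1 (b (x # v))" by (metis append_take_drop_id)
  then show ?thesis by (simp add: sect_def)
qed

lemma lab_z: "b \<in> B \<Longrightarrow> lab b z = id"
  by (rule ext) (simp add: lab_def B_sect_z perm_of_def B_Cons)

lemma sect_bij: assumes "b \<in> B" shows "bij (sect b [x])"
proof (cases "x = z")
  case True
  then show ?thesis using assms B_sect_z B_bij by simp
next
  case False
  then show ?thesis using assms sect_eq_rooted_lab lab_in_A A_bij rooted_bij by metis
qed

lemma inv_B_Nil: "b \<in> B \<Longrightarrow> inv b [] = []"
  using B_Nil B_bij by (metis bij_is_inj inv_f_eq)

lemma inv_B_Cons: assumes "b \<in> B" shows "inv b (x # v) = x # inv (sect b [x]) v"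
proof -
  have "b (x # inv (sect b [x]) v) = x # v"
    using B_Cons[OF assms] sect_bij[OF assms] by (simp add: bij_is_surj surj_f_inv_f)
  then show ?thesis using B_bij[OF assms] by (metis bij_is_inj inv_f_eq)
qed

lemma eval_word_Nil: "word_over A S w \<Longrightarrow> eval_word w [] = []"
  by (induction w rule: dir_count.induct) (auto simp: B_Nil inv_B_Nil S_B)

lemma eval_word_Cons:
  "word_over A S w \<Longrightarrow> eval_word w (y # v) = word_perm w y # eval_word (word_sect z w y) v"
proof (induction w arbitrary: y v rule: dir_count.induct)
  case (3 s w)
  then have "s \<in> B" by (simp add: S_B)
  then show ?case
    using 3 B_sect_z sect_eq_rooted_lab by (auto simp: B_Cons)
next
  case (4 s w)
  then have "s \<in> B" by (simp add: S_B)
  then show ?case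
    using 4 B_sect_z sect_eq_rooted_lab lab_in_A A_bij by (auto simp: inv_B_Cons rooted_inv)
qed auto

lemma word_perm_in_A: "word_over A S w \<Longrightarrow> word_perm w \<in> A"
  by (induction w rule: dir_count.induct) (auto simp: A_id A_comp)

lemma word_over_word_sect: "word_over A S w \<Longrightarrow> word_over A S (word_sect z w y)"
  by (induction w arbitrary: y rule: dir_count.induct) (auto simp: lab_in_A S_B A_inv)

lemma bij_eval_word: "word_over A S w \<Longrightarrow> bij (eval_word w)"
  by (induction w rule: dir_count.induct)
    (auto intro!: bij_comp simp: A_bij rooted_bij B_bij S_B bij_imp_bij_inv)

lemma eval_word_inv: "word_over A S w \<Longrightarrow> inv (eval_word w) = eval_word (word_inv w)"
  by (induction w rule: dir_count.induct)
    (auto simp: word_inv_def o_inv_distrib bij_eval_word A_bij B_bij S_B rooted_bij rooted_inv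
      inv_inv_eq bij_imp_bij_inv)

lemma word_over_word_inv: "word_over A S w \<Longrightarrow> word_over A S (word_inv w)"
  by (induction w rule: dir_count.induct) (auto simp: word_inv_def A_inv)

lemma B_eq_directed_words: "b \<in> B \<longleftrightarrow> (\<exists>w. word_over A S w \<and> directed_word w \<and> b = eval_word w)"
proof
  show "\<exists>w. word_over A S w \<and> directed_word w \<and> b = eval_word w" if "b \<in> B"
    using that unfolding B_eq_gen_S
  proof (induction b rule: gen.induct)
    case gen_id
    then show ?case by (intro exI[of _ "[]"]) (simp add: directed_word_def)
  next
    case (gen_base s)
    then show ?case by (intro exI[of _ "[Dir s]"]) (simp add: directed_word_def)
  next
    case (gen_mult g h)
    then obtain u v where "word_over A S u" "directed_word u" "g = eval_word u"
      "word_over A S v" "directed_word v" "h = eval_word v" by blast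
    then show ?case by (intro exI[of _ "u @ v"]) (auto simp: directed_word_def)
  next
    case (gen_inv g)
    then show ?case using eval_word_inv word_over_word_inv directed_word_word_inv by blast
  qed
  show "b \<in> B" if "\<exists>w. word_over A S w \<and> directed_word w \<and> b = eval_word w"
  proof -
    have "word_over A S w \<Longrightarrow> directed_word w \<Longrightarrow> eval_word w \<in> gen S" for w
      by (induction w rule: dir_count.induct) (auto simp: directed_word_def intro: gen.intros)
    then show ?thesis using that B_eq_gen_S by blast
  qed
qed

lemma CS_gen_words: "g \<in> CS_gen A B \<Longrightarrow> \<exists>w. word_over A S w \<and> g = eval_word w"
  unfolding CS_gen_def
proof (induction g rule: gen.induct)
  case gen_id
  then show ?case by (intro exI[of _ "[]"]) simp
next
  case (gen_base g)
  then show ?case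
  proof
    assume "g \<in> rooted ` A"
    then obtain a where "a \<in> A" "g = rooted a" by blast
    then show ?case by (intro exI[of _ "[Rt a]"]) simp
  qed (use B_eq_directed_words in blast)
next
  case (gen_mult g h)
  then obtain u v where "word_over A S u" "g = eval_word u" "word_over A S v" "h = eval_word v" by blast
  then show ?case by (intro exI[of _ "u @ v"]) auto
next
  case (gen_inv g)
  then show ?case using eval_word_inv word_over_word_inv by blast
qed

lemma eval_word_funpow_eq_id:
  assumes w: "word_over A S w" and "word_perm w = id"
    and sections: "\<And>y. word_sect z w y = w \<or> eval_word (word_sect z w y) ^^ n = id"
  shows "eval_word w ^^ n = id"
proof
  fix u show "(eval_word w ^^ n) u = id u"
  proof (induction u)
    case Nil
    show ?case using eval_word_Nil[OF word_over_word_pow[OF w]] by (simp add: eval_word_pow[symmetric])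
  next
    case (Cons y v)
    have "(eval_word w ^^ n) (y # v) = y # eval_word (word_pow (word_sect z w y) n) v"
      using eval_word_Cons[OF word_over_word_pow[OF w]] assms(2)
      by (simp add: eval_word_pow[symmetric] word_perm_pow word_sect_pow_fixed)
    also have "\<dots> = y # v"
      using sections[of y] Cons by (auto simp: eval_word_pow)
    finally show ?case by simp
  qed
qed



fun sects_trivial :: "'x letter list \<Rightarrow> 'x \<Rightarrow> bool" where
  "sects_trivial [] y = True"
| "sects_trivial (Rt a # w) y = sects_trivial w (a y)"
| "sects_trivial (Dir s # w) y = (sect s [y] = id \<and> sects_trivial w y)"
| "sects_trivial (DirInv s # w) y = (sect s [y] = id \<and> sects_trivial w y)"

lemma eval_word_sect_trivial:
  "word_over A S w \<Longrightarrow> sects_trivial w y \<Longrightarrow> eval_word (word_sect z w y) = id"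
proof (induction w arbitrary: y rule: dir_count.induct)
  case (4 s w)
  then have "s \<in> B" by (simp add: S_B)
  then have "y \<noteq> z \<Longrightarrow> rooted (inv (lab s y)) = inv (sect s [y])"
    using sect_eq_rooted_lab lab_in_A A_bij rooted_inv by metis
  then show ?case using 4 \<open>s \<in> B\<close> B_sect_z by auto
qed (auto simp: S_B B_sect_z sect_eq_rooted_lab)

lemma finite_not_sects_trivial:
  assumes "finite_support z B" shows "word_over A S w \<Longrightarrow> finite {y. \<not> sects_trivial w y}"
proof (induction w rule: dir_count.induct)
  case (2 a w)
  then have "finite (a -` {y. \<not> sects_trivial w y})"
    using A_bij by (intro finite_vimageI) (auto simp: bij_is_inj)
  then show ?case by (simp add: vimage_def)
next
  case (3 s w)
  then have "finite {y. sect s [y] \<noteq> id}" using assms S_B by (simp add: finite_support_def)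
  then show ?case using 3 by (auto intro: finite_subset[of _ "{y. sect s [y] \<noteq> id} \<union> {y. \<not> sects_trivial w y}"])
next
  case (4 s w)
  then have "finite {y. sect s [y] \<noteq> id}" using assms S_B by (simp add: finite_support_def)
  then show ?case using 4 by (auto intro: finite_subset[of _ "{y. sect s [y] \<noteq> id} \<union> {y. \<not> sects_trivial w y}"])
qed simp

lemma finite_dir_count_word_sect: "word_over A S w \<Longrightarrow> finite {y. dir_count (word_sect z w y) \<noteq> 0}"
proof (induction w rule: dir_count.induct)
  case (2 a w)
  then have "finite (a -` {y. dir_count (word_sect z w y) \<noteq> 0})"
    using A_bij by (intro finite_vimageI) (auto simp: bij_is_inj)
  then show ?case by (simp add: vimage_def)
next
  case (3 s w)
  then show ?case by (auto intro: finite_subset[of _ "insert z {y. dir_count (word_sect z w y) \<noteq> 0}"])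
next
  case (4 s w)
  then show ?case by (auto intro: finite_subset[of _ "insert z {y. dir_count (word_sect z w y) \<noteq> 0}"])
qed simp

lemma sections_common_exponent_cofinite:
  assumes "finite_exponent A \<or> finite_support z B" and w: "word_over A S w"
  shows "\<exists>E>0. \<exists>F. finite F \<and> (\<forall>y. y \<notin> F \<longrightarrow> eval_word (word_sect z w y) ^^ E = id)"
  using assms(1)
proof
  assume "finite_exponent A"
  then obtain E where E: "E > 0" "\<forall>g\<in>A. g ^^ E = id" by (auto simp: finite_exponent_def)
  have "eval_word (word_sect z w y) ^^ E = id" if "dir_count (word_sect z w y) = 0" for y
    using that E word_perm_in_A[OF word_over_word_sect[OF w]]
    by (simp add: dir_count_eq_0_eval_word rooted_funpow)
  then show ?thesis using E finite_dir_count_word_sect[OF w] by (intro exI[of _ E]) auto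
next
  assume "finite_support z B"
  then show ?thesis
    using finite_not_sects_trivial w eval_word_sect_trivial[OF w] by (intro exI[of _ 1]) auto
qed

end

section \<open>Return sections\<close>

definition return_sect :: "'x \<Rightarrow> 'x letter list \<Rightarrow> 'x \<Rightarrow> 'x letter list" where
  "return_sect z w y = word_sect z (word_pow w (orbit_period (word_perm w) y)) y"

lemma return_sect_fixed: "word_perm w = id \<Longrightarrow> return_sect z w y = word_sect z w y"
  by (simp add: return_sect_def orbit_period_id word_pow_def)

locale periodic_cs_setting = cs_setting +
  assumes periodic_A: "periodic A"
    and exponent_or_support: "finite_exponent A \<or> finite_support z B"
begin

lemma A_finite_order: "a \<in> A \<Longrightarrow> finite_order a"
  using periodic_A by (auto simp: periodic_def finite_order_def)

lemma periodic_point_word_perm: "word_over A S w \<Longrightarrow> \<exists>k>0. (word_perm w ^^ k) y = y"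
  using A_finite_order[OF word_perm_in_A] unfolding finite_order_def by fastforce

lemma B_finite_order: assumes "b \<in> B" shows "finite_order b"
proof -
  obtain w where w: "word_over A S w" "directed_word w" and b: "b = eval_word w"
    using assms B_eq_directed_words by blast
  obtain E F where EF: "E > 0" "finite F" "\<And>y. y \<notin> F \<Longrightarrow> eval_word (word_sect z w y) ^^ E = id"
    using sections_common_exponent_cofinite[OF exponent_or_support w(1)] by blast
  define u where "u y = (if y = z then id else eval_word (word_sect z w y))" for y
  have "finite_order (u y)" for y
  proof (cases "y = z")
    case False
    then have "eval_word (word_sect z w y) = rooted (word_perm (word_sect z w y))"
      using dir_count_eq_0_eval_word directed_word_word_sect[OF w(2)] by blast
    then show ?thesis
      using False finite_order_rooted[OF A_finite_order[OF word_perm_in_A[OF word_over_word_sect[OF w(1)]]]]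
      by (simp add: u_def)
  qed (auto simp: u_def finite_order_def intro: exI[of _ 1])
  moreover have "u y ^^ E = id" if "y \<notin> F" for y
    using EF that by (simp add: u_def)
  ultimately obtain K where K: "K > 0" "\<And>y. u y ^^ K = id"
    using common_exponent[of u F E] EF by blast
  have "eval_word w ^^ K = id"
  proof (rule eval_word_funpow_eq_id[OF w(1) directed_word_word_perm[OF w(2)]])
    show "word_sect z w y = w \<or> eval_word (word_sect z w y) ^^ K = id" for y
      using K(2)[of y] directed_word_word_sect_z[OF w(2)] by (cases "y = z") (auto simp: u_def)
  qed
  then show ?thesis using K(1) b by (auto simp: finite_order_def)
qed

text \<open>Passing to the power \<open>w\<^sup>k\<close> with \<open>k\<close> the order of the root permutation, whose section at
  \<open>y\<close> is a power of the return section; outside a finite set the sections share an exponent.\<close>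

lemma finite_order_from_return_sects:
  assumes w: "word_over A S w" and sects: "\<And>y. finite_order (eval_word (return_sect z w y))"
  shows "finite_order (eval_word w)"
proof -
  define a where "a = word_perm w"
  obtain k where k: "k > 0" "a ^^ k = id"
    using A_finite_order[OF word_perm_in_A[OF w]] unfolding a_def finite_order_def by blast
  define W where "W = word_pow w k"
  have W: "word_over A S W" "word_perm W = id"
    using word_over_word_pow[OF w] k by (simp_all add: W_def word_perm_pow a_def)
  obtain E F where EF: "E > 0" "finite F" "\<And>y. y \<notin> F \<Longrightarrow> eval_word (word_sect z W y) ^^ E = id"
    using sections_common_exponent_cofinite[OF exponent_or_support W(1)] by blast
  have "finite_order (eval_word (word_sect z W y))" for y
  proof -
    have periodic: "\<exists>k>0. (a ^^ k) y = y" using k by auto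
    have "orbit_period a y dvd k" using orbit_period_dvd[OF periodic] k by simp
    then obtain q where q: "k = orbit_period a y * q" by (rule dvdE)
    have "word_perm (word_pow w (orbit_period a y)) y = y"
      using funpow_orbit_period[OF periodic] by (simp add: word_perm_pow a_def)
    then have "word_sect z W y = word_pow (return_sect z w y) q"
      unfolding W_def q word_pow_mult return_sect_def a_def by (rule word_sect_pow_fixed)
    then show ?thesis using finite_order_funpow[OF sects] by (simp add: eval_word_pow)
  qed
  then obtain K where K: "K > 0" "\<And>y. eval_word (word_sect z W y) ^^ K = id"
    using common_exponent[of "\<lambda>y. eval_word (word_sect z W y)" F E] EF by blast
  have "eval_word W ^^ K = id"
    using eval_word_funpow_eq_id[OF W] K(2) by blast
  then have "eval_word w ^^ (k * K) = id"
    by (simp add: W_def eval_word_pow funpow_mult)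
  moreover have "k * K > 0" using k K by simp
  ultimately show ?thesis unfolding finite_order_def by blast
qed

end

section \<open>Return sections and the map \<open>\<Sigma>\<^sub>S\<close>\<close>

definition HS_gens :: "'x \<Rightarrow> ('x \<Rightarrow> 'x) set \<Rightarrow> ('x list \<Rightarrow> 'x list) set \<Rightarrow> ('x \<Rightarrow> 'x) \<Rightarrow> 'x \<Rightarrow> ('x \<Rightarrow> 'x) set" where
  "HS_gens z A S a x = {lab b y | b y. y \<in> XX z A a x \<and> b \<in> S}"

definition orbit_lab_prod :: "'x \<Rightarrow> ('x \<Rightarrow> 'x) \<Rightarrow> ('x list \<Rightarrow> 'x list) \<Rightarrow> ('x \<Rightarrow> 'x)" where
  "orbit_lab_prod z c b = rprod (map (\<lambda>i. lab b ((c ^^ i) z)) [1..<orb_len c z])"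

definition sigma_gens :: "'x \<Rightarrow> ('x \<Rightarrow> 'x) set \<Rightarrow> ('x list \<Rightarrow> 'x list) set \<Rightarrow> ('x \<Rightarrow> 'x) \<Rightarrow> 'x \<Rightarrow> ('x \<Rightarrow> 'x) set" where
  "sigma_gens z A S a x = {orbit_lab_prod z c b | c b. c \<in> CC z A a x \<and> b \<in> S}"

fun occ_sigma_gen :: "'x \<Rightarrow> ('x \<Rightarrow> 'x) \<Rightarrow> ('x \<Rightarrow> 'x) \<times> bool \<times> ('x list \<Rightarrow> 'x list) \<Rightarrow> ('x \<Rightarrow> 'x)" where
  "occ_sigma_gen z a (p, e, s) =
    (if e then orbit_lab_prod z (p \<circ> a \<circ> inv p) s else inv (orbit_lab_prod z (p \<circ> a \<circ> inv p) s))"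

lemma HS_eq_gen: "HS z A S a x = gen (HS_gens z A S a x)"
  by (simp add: HS_def HS_gens_def)

lemma sigma_eq_setmul: "sigma z A S a x = setmul (gen (sigma_gens z A S a x)) (derived (HS z A S a x))"
  by (simp add: sigma_def sigma_gens_def orbit_lab_prod_def)

lemma length_filter_eq_count: "length (filter (\<lambda>i. f i = c) xs) = count (mset (map f xs)) c"
  by (induction xs) auto

lemma sum_list_le_length: "\<forall>x\<in>set xs. f x \<le> (1::nat) \<Longrightarrow> (\<Sum>x\<leftarrow>xs. f x) \<le> length xs"
  using sum_list_mono[of xs f "\<lambda>_. 1"] by (simp add: sum_list_triv)

lemma sum_list_eq_length_imp_eq_1:
  "\<forall>x\<in>set xs. f x \<le> (1::nat) \<Longrightarrow> (\<Sum>x\<leftarrow>xs. f x) = length xs \<Longrightarrow> x \<in> set xs \<Longrightarrow> f x = 1"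
proof (induction xs)
  case (Cons a xs)
  then have "f a \<le> 1" "(\<Sum>x\<leftarrow>xs. f x) \<le> length xs" using sum_list_le_length[of xs f] by auto
  with Cons show ?case by auto
qed simp

context cs_setting
begin

lemma bij_gens_HS_gens: "bij_gens (HS_gens z A S a x)"
proof
  fix h assume "h \<in> HS_gens z A S a x"
  then obtain b y where "h = lab b y" "y \<in> XX z A a x" "b \<in> S" unfolding HS_gens_def by blast
  moreover have "y \<noteq> z" using \<open>y \<in> XX z A a x\<close> unfolding XX_def by blast
  ultimately show "bij h" using lab_in_A S_B A_bij by blast
qed

lemma dir_occs_in_A_S:
  "word_over A S w \<Longrightarrow> p \<in> A \<Longrightarrow> (q, e, s) \<in> set (dir_occs p w) \<Longrightarrow> q \<in> A \<and> s \<in> S"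
proof (induction w arbitrary: p rule: dir_count.induct)
  case (2 a w)
  then show ?case using A_comp[of p a] by auto
qed auto

lemma word_perm_word_sect_dir_occs:
  "word_over A S w \<Longrightarrow> word_perm (word_sect z w (p y)) = rprod (map (\<lambda>t. occ_lab t y) (dir_occs p w))"
proof (induction w arbitrary: p rule: dir_count.induct)
  case (2 a w)
  then show ?case using "2.IH"[of "a \<circ> p"] by (simp add: comp_def)
next
  case (3 s w)
  then have "lab s z = id" by (simp add: lab_z S_B)
  with 3 show ?case using "3.IH"[of p] by (cases "p y = z") simp_all
next
  case (4 s w)
  then have "lab s z = id" by (simp add: lab_z S_B)
  with 4 show ?case using "4.IH"[of p] by (cases "p y = z") simp_all
qed simp

context
  fixes w y
  assumes w: "word_over A S w" and y: "\<exists>k>0. (word_perm w ^^ k) y = y"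
begin

abbreviation hits :: "('x \<Rightarrow> 'x) \<times> bool \<times> ('x list \<Rightarrow> 'x list) \<Rightarrow> nat" where
  "hits t \<equiv> length (filter (\<lambda>i. fst t ((word_perm w ^^ i) y) = z) [0..<orbit_period (word_perm w) y])"

lemma orbit_hits_le_1: assumes t: "t \<in> set (dir_occs id w)" shows "hits t \<le> 1"
proof -
  have "fst t \<in> A" using dir_occs_in_A_S[OF w A_id] t by (cases t) auto
  then have "inj (fst t)" using A_bij bij_is_inj by blast
  moreover have "distinct (map (\<lambda>i. (word_perm w ^^ i) y) [0..<orbit_period (word_perm w) y])"
    using distinct_orbit_list[OF y bij_is_inj[OF A_bij[OF word_perm_in_A[OF w]]]] .
  ultimately have "distinct (map (fst t) (map (\<lambda>i. (word_perm w ^^ i) y) [0..<orbit_period (word_perm w) y]))"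
    by (simp only: distinct_map inj_on_subset[OF _ subset_UNIV])
  then show ?thesis
    unfolding length_filter_eq_count map_map comp_def by (metis distinct_count_atmost_1 order_refl zero_le_one)
qed

lemma dir_count_return_sect: "dir_count (return_sect z w y) = (\<Sum>t\<leftarrow>dir_occs id w. hits t)"
  by (simp add: return_sect_def dir_count_word_sect_pow)

lemma dir_count_return_sect_le: "dir_count (return_sect z w y) \<le> dir_count w"
  unfolding dir_count_return_sect dir_count_eq_length_dir_occs[of w id]
  using orbit_hits_le_1 by (intro sum_list_le_length) blast

lemma full_return_sect_hits_z:
  assumes full: "dir_count (return_sect z w y) = dir_count w" and t: "t \<in> set (dir_occs id w)"
  shows "\<exists>m < orbit_period (word_perm w) y. fst t ((word_perm w ^^ m) y) = z"
proof -
  have "hits t = 1"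
    using sum_list_eq_length_imp_eq_1[of "dir_occs id w" hits t] orbit_hits_le_1 full t
    unfolding dir_count_return_sect dir_count_eq_length_dir_occs[of w id] by blast
  then have "filter (\<lambda>i. fst t ((word_perm w ^^ i) y) = z) [0..<orbit_period (word_perm w) y] \<noteq> []"
    by auto
  then show ?thesis by (auto simp: filter_empty_conv)
qed

end

lemma conj_in_CC:
  assumes a: "a \<in> A" and p: "p \<in> A" and y: "\<exists>k>0. (a ^^ k) y = y"
    and m: "m < orbit_period a y" and hit: "p ((a ^^ m) y) = z"
  shows "p \<circ> a \<circ> inv p \<in> CC z A a y"
proof -
  define r where "r = orbit_period a y - m"
  define c where "c = a ^^ r \<circ> inv p"
  have bp: "bij p" and bar: "bij (a ^^ r)" using A_bij a p A_funpow by auto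
  have "c \<in> A" unfolding c_def by (rule A_comp[OF A_inv[OF p] A_funpow[OF a]])
  moreover have "c z = y"
  proof -
    have "c z = (a ^^ (r + m)) y"
      unfolding c_def using hit bij_inv_left[OF bp] by (metis comp_apply funpow_add)
    then show ?thesis using m funpow_orbit_period[OF y] by (simp add: r_def)
  qed
  moreover have "p \<circ> a \<circ> inv p = inv c \<circ> a \<circ> c"
  proof
    fix x
    have "inv c = p \<circ> inv (a ^^ r)" unfolding c_def using bar bp
      by (simp add: o_inv_distrib bij_imp_bij_inv inv_inv_eq)
    moreover have "a ((a ^^ r) (inv p x)) = (a ^^ r) (a (inv p x))" by (rule funpow_swap1)
    ultimately show "(p \<circ> a \<circ> inv p) x = (inv c \<circ> a \<circ> c) x"
      using bij_inv_left[OF bar] by (simp add: c_def)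
  qed
  ultimately show ?thesis unfolding CC_def mp_def by blast
qed

text \<open>The contribution of one directed letter \<open>s\<close> (preceded by \<open>p\<close>) to the return section is the
  product of the labels of \<open>s\<close> along the orbit; modulo the derived subgroup it may be reordered into
  the generator of \<open>\<sigma>\<close> that belongs to the conjugate \<open>p a p\<inverse> \<in> \<CC>(a, y)\<close>.\<close>

lemma orbit_labs_mod_derived:
  assumes a: "a \<in> A" and p: "p \<in> A" and s: "s \<in> S"
    and y: "\<exists>k>0. (a ^^ k) y = y" and m: "m < orbit_period a y" and hit: "p ((a ^^ m) y) = z"
  defines "labs \<equiv> map (\<lambda>i. lab s (p ((a ^^ i) y))) [0..<orbit_period a y]"
    and "g \<equiv> orbit_lab_prod z (p \<circ> a \<circ> inv p) s"
  shows "set labs \<subseteq> HS z A S a y" and "g \<in> HS z A S a y" and "g \<in> sigma_gens z A S a y"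
    and "mod_derived (HS z A S a y) (rprod labs) g"
proof -
  define d where "d = p \<circ> a \<circ> inv p"
  define l where "l = orbit_period a y"
  have bp: "bij p" and ba: "bij a" using A_bij a p by auto
  note orbit = conj_orbit[OF bp ba y hit, folded d_def l_def]
  have d_CC: "d \<in> CC z A a y" unfolding d_def by (rule conj_in_CC[OF a p y m hit])
  have lab_HS: "lab s q \<in> HS z A S a y" if "q \<in> orb d z" for q
  proof (cases "q = z")
    case True
    then show ?thesis using lab_z[OF S_B[OF s]] by (simp add: HS_def gen.gen_id)
  next
    case False
    then have "q \<in> XX z A a y" using that d_CC unfolding XX_def by blast
    then show ?thesis using s unfolding HS_eq_gen HS_gens_def by (blast intro: gen.gen_base)
  qed
  have d_orbit: "(d ^^ i) z \<in> orb d z" for i unfolding orb_def by blast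
  have "p ((a ^^ i) y) \<in> orb d z" for i
    using orbit(1) unfolding orb_def by blast
  then show labs: "set labs \<subseteq> HS z A S a y"
    using lab_HS unfolding labs_def by auto
  have g: "g = rprod (map (lab s) (map (\<lambda>i. (d ^^ i) z) [0..<l]))"
  proof -
    have "[0..<l] = 0 # [1..<l]" using orbit_period_pos[OF y] by (simp add: l_def upt_conv_Cons)
    then show ?thesis
      using lab_z[OF S_B[OF s]] unfolding g_def orbit_lab_prod_def d_def[symmetric] orbit(2)
      by (simp add: comp_def)
  qed
  show "g \<in> HS z A S a y"
    unfolding g HS_eq_gen using lab_HS d_orbit by (intro rprod_in_gen) (auto simp: HS_eq_gen)
  show "g \<in> sigma_gens z A S a y"
    unfolding g_def sigma_gens_def using d_CC s d_def by blast
  interpret bij_gens "HS_gens z A S a y" by (rule bij_gens_HS_gens)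
  have "labs = map (lab s) (map (\<lambda>i. p ((a ^^ i) y)) [0..<l])"
    unfolding labs_def l_def by simp
  then have "mset labs = mset (map (lab s) (map (\<lambda>i. (d ^^ i) z) [0..<l]))"
    using orbit(3) by (metis mset_map)
  then show "mod_derived (HS z A S a y) (rprod labs) g"
    unfolding g HS_eq_gen using labs by (intro mod_derived_rprod_perm) (simp_all add: HS_eq_gen)
qed

end

lemma mset_concat_map_swap:
  "mset (concat (map (\<lambda>i. map (f i) ys) xs)) = mset (concat (map (\<lambda>t. map (\<lambda>i. f i t) xs) ys))"
proof (induction xs)
  case Nil
  then show ?case by (induction ys) auto
next
  case (Cons x xs)
  have cons: "mset (concat (map (\<lambda>t. g t # h t) ys)) = mset (map g ys) + mset (concat (map h ys))" for g h
    by (induction ys) (auto simp: add_ac)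
  have "mset (concat (map (\<lambda>t. map (\<lambda>i. f i t) (x # xs)) ys))
      = mset (map (f x) ys) + mset (concat (map (\<lambda>t. map (\<lambda>i. f i t) xs) ys))"
    using cons[of "f x" "\<lambda>t. map (\<lambda>i. f i t) xs"] by simp
  then show ?case using Cons by simp
qed

lemma Sigma_map_funpow_mono: "U \<subseteq> V \<Longrightarrow> (Sigma_map z A S ^^ m) U \<subseteq> (Sigma_map z A S ^^ m) V"
proof (induction m)
  case (Suc m)
  then show ?case unfolding Sigma_map_def by auto
qed simp

context cs_setting
begin

lemma dir_occ_block_mod_derived:
  assumes w: "word_over A S w" and y: "\<exists>k>0. (word_perm w ^^ k) y = y"
    and full: "dir_count (return_sect z w y) = dir_count w" and t: "t \<in> set (dir_occs id w)"
  defines "a \<equiv> word_perm w"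
  defines "block \<equiv> map (\<lambda>i. occ_lab t ((a ^^ i) y)) [0..<orbit_period a y]"
  shows "set block \<subseteq> HS z A S a y" and "occ_sigma_gen z a t \<in> HS z A S a y"
    and "occ_sigma_gen z a t \<in> gen (sigma_gens z A S a y)"
    and "mod_derived (HS z A S a y) (rprod block) (occ_sigma_gen z a t)"
proof -
  obtain p e s where pes: "t = (p, e, s)" by (cases t)
  have p: "p \<in> A" and s: "s \<in> S" using dir_occs_in_A_S[OF w A_id] t pes by auto
  obtain m where m: "m < orbit_period a y" and hit: "p ((a ^^ m) y) = z"
    using full_return_sect_hits_z[OF w y full t] pes unfolding a_def by auto
  define g where "g = orbit_lab_prod z (p \<circ> a \<circ> inv p) s"
  note labs = orbit_labs_mod_derived[OF word_perm_in_A[OF w, folded a_def] p s y[folded a_def] m hit, folded g_def]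
  interpret bij_gens "HS_gens z A S a y" by (rule bij_gens_HS_gens)
  define labs where "labs = map (\<lambda>i. lab s (p ((a ^^ i) y))) [0..<orbit_period a y]"
  have block: "block = (if e then labs else map inv labs)"
    unfolding block_def labs_def pes by simp
  have gen: "occ_sigma_gen z a t = (if e then g else inv g)"
    unfolding pes g_def by simp
  show "set block \<subseteq> HS z A S a y"
    using labs(1) unfolding block HS_eq_gen labs_def by (auto intro: gen.gen_inv)
  show "occ_sigma_gen z a t \<in> HS z A S a y"
    using labs(2) unfolding gen HS_eq_gen by (auto intro: gen.gen_inv)
  show "occ_sigma_gen z a t \<in> gen (sigma_gens z A S a y)"
    using labs(3) unfolding gen by (auto intro: gen.gen_base gen.gen_inv)
  have "mod_derived (HS z A S a y) (rprod (map inv labs)) (inv g)"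
    using mod_derived_rprod_inv labs(1,2,4) mod_derived_inv mod_derived_trans
    unfolding HS_eq_gen labs_def by blast
  then show "mod_derived (HS z A S a y) (rprod block) (occ_sigma_gen z a t)"
    using labs(4) unfolding block gen labs_def by simp
qed

text \<open>When the return section keeps all directed letters, its root permutation lies in
  \<open>\<sigma>\<^sub>S(a, y)\<close>: the labels read along the orbit of \<open>y\<close> are regrouped modulo \<open>H\<^sub>S(a, y)'\<close>
  letter by letter.\<close>

lemma full_return_sect_perm_in_Sigma:
  assumes w: "word_over A S w" and y: "\<exists>k>0. (word_perm w ^^ k) y = y"
    and full: "dir_count (return_sect z w y) = dir_count w"
  shows "word_perm (return_sect z w y) \<in> Sigma_map z A S {word_perm w}"
proof -
  define a where "a = word_perm w"
  define l where "l = orbit_period a y"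
  define occs where "occs = dir_occs id w"
  define block where "block t = map (\<lambda>i. occ_lab t ((a ^^ i) y)) [0..<l]" for t
  define Q where "Q = occ_sigma_gen z a"
  interpret bij_gens "HS_gens z A S a y" by (rule bij_gens_HS_gens)
  note occ = dir_occ_block_mod_derived[OF w y full, folded a_def, folded l_def occs_def,
      folded block_def Q_def, unfolded HS_eq_gen]
  have perm: "word_perm (return_sect z w y) = rprod (concat (map (\<lambda>i. map (\<lambda>t. occ_lab t ((a ^^ i) y)) occs) [0..<l]))"
    using word_perm_word_sect_dir_occs[OF w, where p = id]
    by (simp add: return_sect_def word_sect_pow word_perm_concat rprod_concat comp_def a_def l_def occs_def)
  have reorder: "mod_derived H (rprod (concat (map (\<lambda>i. map (\<lambda>t. occ_lab t ((a ^^ i) y)) occs) [0..<l])))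
      (rprod (concat (map block occs)))"
  proof (unfold block_def, rule mod_derived_rprod_perm)
    have "occ_lab t ((a ^^ i) y) \<in> H" if "t \<in> set occs" "i < l" for t i
      using occ(1)[OF that(1)] that(2) unfolding block_def by auto
    then show "set (concat (map (\<lambda>i. map (\<lambda>t. occ_lab t ((a ^^ i) y)) occs) [0..<l])) \<subseteq> H"
      by auto
  qed (rule mset_concat_map_swap[of "\<lambda>i t. occ_lab t ((a ^^ i) y)"])
  have regroup: "mod_derived H (rprod (concat (map block occs))) (rprod (map Q occs))"
    unfolding rprod_concat
  proof (rule mod_derived_rprod)
    show "list_all2 (mod_derived H) (map rprod (map block occs)) (map Q occs)"
      using occ(4) by (simp add: list.rel_map list_all2_same)
    show "set (map Q occs) \<subseteq> H" using occ(2) by auto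
  qed
  obtain k where "k \<in> derived H" "word_perm (return_sect z w y) = k \<circ> rprod (map Q occs)"
    using mod_derived_trans[OF reorder regroup] unfolding perm mod_derived_def by blast
  moreover have "rprod (map Q occs) \<in> gen (sigma_gens z A S a y)"
    using occ(3) by (intro rprod_in_gen) auto
  ultimately have "word_perm (return_sect z w y) \<in> sigma z A S a y"
    unfolding sigma_eq_setmul setmul_def HS_eq_gen by blast
  then show ?thesis unfolding Sigma_map_def a_def by blast
qed

end

context periodic_cs_setting
begin

text \<open>With trivial root permutation the return sections are plain sections, and a section keeping
  all directed letters is a directed word, i.e. an element of \<open>B\<close>.\<close>

lemma finite_order_if_word_perm_id:
  assumes IH: "\<And>W. word_over A S W \<Longrightarrow> dir_count W < dir_count w \<Longrightarrow> finite_order (eval_word W)"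
    and w: "word_over A S w" and perm: "word_perm w = id"
  shows "finite_order (eval_word w)"
proof (rule finite_order_from_return_sects[OF w])
  fix y
  have sect: "word_over A S (word_sect z w y)" by (rule word_over_word_sect[OF w])
  show "finite_order (eval_word (return_sect z w y))"
  proof (cases "dir_count (word_sect z w y) < dir_count w")
    case False
    then have "directed_word (word_sect z w y)"
      using dir_count_word_sect_le[of z w y] word_sect_full_count by (simp add: le_antisym)
    then show ?thesis
      using B_finite_order B_eq_directed_words sect return_sect_fixed[OF perm] by auto
  qed (use IH sect return_sect_fixed[OF perm] in simp)
qed

text \<open>Inner induction: \<open>k\<close> bounds the number of steps after which \<open>\<Sigma>\<^sub>S\<close> kills the root
  permutation of \<open>w\<close>; return sections either lose a directed letter (outer induction) or have a
  root permutation in \<open>\<Sigma>\<^sub>S\<close> of that of \<open>w\<close>.\<close>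

lemma finite_order_by_Sigma_descent:
  assumes IH: "\<And>W. word_over A S W \<Longrightarrow> dir_count W < dir_count w \<Longrightarrow> finite_order (eval_word W)"
    and w: "word_over A S w" and trivial: "\<forall>m\<ge>k. (Sigma_map z A S ^^ m) {word_perm w} \<subseteq> {id}"
  shows "finite_order (eval_word w)"
  using IH w trivial
proof (induction k arbitrary: w)
  case 0
  then have "(Sigma_map z A S ^^ 0) {word_perm w} \<subseteq> {id}" by blast
  then show ?case using finite_order_if_word_perm_id[OF "0.prems"(1,2)] by simp
next
  case (Suc k)
  show ?case
  proof (rule finite_order_from_return_sects[OF Suc.prems(2)])
    fix y
    define W where "W = return_sect z w y"
    have y: "\<exists>k>0. (word_perm w ^^ k) y = y" by (rule periodic_point_word_perm[OF Suc.prems(2)])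
    have W: "word_over A S W"
      unfolding W_def return_sect_def by (intro word_over_word_sect word_over_word_pow Suc.prems(2))
    show "finite_order (eval_word W)"
    proof (cases "dir_count W < dir_count w")
      case False
      then have full: "dir_count W = dir_count w"
        using dir_count_return_sect_le[OF Suc.prems(2) y] W_def by simp
      have step: "{word_perm W} \<subseteq> Sigma_map z A S {word_perm w}"
        using full_return_sect_perm_in_Sigma[OF Suc.prems(2) y] full W_def by simp
      then have "(Sigma_map z A S ^^ m) {word_perm W} \<subseteq> (Sigma_map z A S ^^ Suc m) {word_perm w}" for m
        using Sigma_map_funpow_mono[OF step] by (simp add: funpow_Suc_right del: funpow.simps)
      then have "\<forall>m\<ge>k. (Sigma_map z A S ^^ m) {word_perm W} \<subseteq> {id}"
        using Suc.prems(3) by (meson Suc_le_mono order_trans)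
      moreover have "finite_order (eval_word W')"
        if "word_over A S W'" "dir_count W' < dir_count W" for W'
        using Suc.prems(1) full that by simp
      ultimately show ?thesis using Suc.IH W by blast
    qed (use Suc.prems(1) W in simp)
  qed
qed

lemma eval_word_finite_order:
  assumes "eventually_trivial z A S" shows "word_over A S w \<Longrightarrow> finite_order (eval_word w)"
proof (induction "dir_count w" arbitrary: w rule: less_induct)
  case less
  obtain n where "\<forall>m>n. (Sigma_map z A S ^^ m) {word_perm w} \<subseteq> {id}"
    using assms word_perm_in_A[OF less.prems] unfolding eventually_trivial_def by blast
  then have "\<forall>m\<ge>Suc n. (Sigma_map z A S ^^ m) {word_perm w} \<subseteq> {id}" by simp
  then show ?case using finite_order_by_Sigma_descent less by blast
qed

end

theorem theoremB:
  fixes z :: 'x and A :: "('x \<Rightarrow> 'x) set" and B S :: "('x list \<Rightarrow> 'x list) set"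
  assumes "CS_group z A B"
    and "periodic A"
    and "finite_exponent A \<or> finite_support z B"
    and "S \<subseteq> B" and "B = gen S"
    and "eventually_trivial z A S"
  shows "periodic (CS_gen A B)"
proof -
  interpret periodic_cs_setting z A B S
    using assms(1-5) by unfold_locales
  show ?thesis unfolding periodic_def
  proof
    fix g assume "g \<in> CS_gen A B"
    then obtain w where "word_over A S w" "g = eval_word w" using CS_gen_words by blast
    then show "\<exists>n>0. g ^^ n = id"
      using eval_word_finite_order[OF assms(6)] unfolding finite_order_def by blast
  qed
qed

end
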